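(* Let $G$ be a finite group, let $\pi$ be a set of primes, let $q\in\pi$ and let $Q$ be a Sylow $q$-subgroup of $G$. Let $\mathcal{S}_{q'}(G_\pi)$ denote the union of all conjugacy classes $g^G$ with $g$ a $\pi$-element of $G$ such that $|g^G|$ is not divisible by $q$. If $\mathbf{Z}(Q)\le\mathbf{Z}(G)$ and $C_G(Q)$ has a normal Hall $\pi$-subgroup, then $|\mathbf{Z}(G)|_q=|\mathcal{S}_{q'}(G_\pi)|_q$.
   Context: A $\pi$-element is an element whose order is divisible only by primes in $\pi$. For a positive integer $n$ and prime $q$, $n_q$ denotes the largest power of $q$ dividing $n$. $|g^G|=|G:C_G(g)|$ is the size of the conjugacy class of $g$. *)

theory Defs
  imports "HOL-Algebra.Algebra" "HOL-Computational_Algebra.Primes"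
begin

definition q_part :: "nat \<Rightarrow> nat \<Rightarrow> nat" where
  "q_part q n = q ^ multiplicity q n"

definition centralizer :: "('a, 'b) monoid_scheme \<Rightarrow> 'a set \<Rightarrow> 'a set" where
  "centralizer G S = {g \<in> carrier G. \<forall>s\<in>S. g \<otimes>\<^bsub>G\<^esub> s = s \<otimes>\<^bsub>G\<^esub> g}"

definition center :: "('a, 'b) monoid_scheme \<Rightarrow> 'a set" where
  "center G = centralizer G (carrier G)"

definition conj_class :: "('a, 'b) monoid_scheme \<Rightarrow> 'a \<Rightarrow> 'a set" where
  "conj_class G g = {x \<otimes>\<^bsub>G\<^esub> g \<otimes>\<^bsub>G\<^esub> inv\<^bsub>G\<^esub> x | x. x \<in> carrier G}"

definition pi_number :: "nat set \<Rightarrow> nat \<Rightarrow> bool" where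
  "pi_number \<pi> n \<longleftrightarrow> (\<forall>p. Factorial_Ring.prime p \<longrightarrow> p dvd n \<longrightarrow> p \<in> \<pi>)"

definition pi_element :: "('a, 'b) monoid_scheme \<Rightarrow> nat set \<Rightarrow> 'a \<Rightarrow> bool" where
  "pi_element G \<pi> g \<longleftrightarrow> g \<in> carrier G \<and> pi_number \<pi> (group.ord G g)"

definition sylow_subgroup :: "('a, 'b) monoid_scheme \<Rightarrow> nat \<Rightarrow> 'a set \<Rightarrow> bool" where
  "sylow_subgroup G q Q \<longleftrightarrow> subgroup Q G \<and> card Q = q_part q (order G)"

definition hall_subgroup :: "('a, 'b) monoid_scheme \<Rightarrow> nat set \<Rightarrow> 'a set \<Rightarrow> 'a set \<Rightarrow> bool" where
  "hall_subgroup G \<pi> K H \<longleftrightarrow> subgroup H G \<and> H \<subseteq> K \<and>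
     pi_number \<pi> (card H) \<and> (\<forall>p\<in>\<pi>. \<not> p dvd (card K div card H))"

definition normal_in :: "('a, 'b) monoid_scheme \<Rightarrow> 'a set \<Rightarrow> 'a set \<Rightarrow> bool" where
  "normal_in G H K \<longleftrightarrow> H \<subseteq> K \<and> (\<forall>k\<in>K. \<forall>h\<in>H. k \<otimes>\<^bsub>G\<^esub> h \<otimes>\<^bsub>G\<^esub> inv\<^bsub>G\<^esub> k \<in> H)"

definition S_qprime_pi :: "('a, 'b) monoid_scheme \<Rightarrow> nat set \<Rightarrow> nat \<Rightarrow> 'a set" where
  "S_qprime_pi G \<pi> q = \<Union>{conj_class G g | g. pi_element G \<pi> g \<and> \<not> q dvd card (conj_class G g)}"

end

theory Submission
  imports Defs
begin

text \<open>
  Write Z = Z(Q) and C = C_G(Q); then Z = Q \<inter> C is central in G. A q-element commuting with a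
  Sylow q-subgroup lies in it, so every q-element of C lies in Z, and Z is a Sylow q-subgroup of
  every subgroup T with Z \<subseteq> T \<subseteq> C. For T = Z(G) this gives |Z(G)|_q = |Z|.

  The set S = S_q'(G_\<pi>) is a union of cosets of Z, which Q permutes by conjugation. A coset Z g is
  fixed exactly when g lies in the normal Hall \<pi>-subgroup H of C: the q-part of g has class size
  prime to q, so it is conjugate into Z(Q) \<subseteq> Z(G) and hence lies in Z; the q'-part of g commutes
  with Q modulo the q-group Z, hence with Q itself, so it is a \<pi>-element of C and lies in H.
  Counting fixed points modulo q, |S : Z| \<equiv> |H : Z|, which is prime to q by the first paragraph
  applied to T = H. Hence also |S|_q = |Z|.
\<close>

section \<open>Fixed points of actions of q-groups\<close>

lemma group_actionI:
  assumes "group A"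
    and closed: "\<And>g x. g \<in> carrier A \<Longrightarrow> x \<in> E \<Longrightarrow> \<phi> g x \<in> E"
    and one: "\<And>x. x \<in> E \<Longrightarrow> \<phi> \<one>\<^bsub>A\<^esub> x = x"
    and mult: "\<And>g h x. \<lbrakk>g \<in> carrier A; h \<in> carrier A; x \<in> E\<rbrakk> \<Longrightarrow>
                 \<phi> (g \<otimes>\<^bsub>A\<^esub> h) x = \<phi> g (\<phi> h x)"
  shows "group_action A E (\<lambda>g. \<lambda>x\<in>E. \<phi> g x)"
proof -
  interpret A: group A by fact
  have bij: "(\<lambda>x\<in>E. \<phi> g x) \<in> Bij E" if g: "g \<in> carrier A" for g
  proof -
    have "\<phi> (inv\<^bsub>A\<^esub> g) (\<phi> g x) = x" "\<phi> g (\<phi> (inv\<^bsub>A\<^esub> g) x) = x" if "x \<in> E" for x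
      using mult[of "inv\<^bsub>A\<^esub> g" g x] mult[of g "inv\<^bsub>A\<^esub> g" x] one[of x] g that by simp_all
    then have "bij_betw (\<lambda>x\<in>E. \<phi> g x) E E"
      using closed g by (intro bij_betw_byWitness[where f' = "\<phi> (inv\<^bsub>A\<^esub> g)"]) auto
    then show ?thesis by (simp add: Bij_def)
  qed
  have "(\<lambda>x\<in>E. \<phi> (g \<otimes>\<^bsub>A\<^esub> h) x) = (\<lambda>x\<in>E. \<phi> g x) \<otimes>\<^bsub>BijGroup E\<^esub> (\<lambda>x\<in>E. \<phi> h x)"
    if "g \<in> carrier A" "h \<in> carrier A" for g h
    using that bij mult closed by (auto simp: BijGroup_def compose_def)
  then show ?thesis
    using bij \<open>group A\<close> group_BijGroup
    by (auto intro!: homI simp: group_action_def group_hom_def group_hom_axioms_def BijGroup_def)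
qed

lemma (in group_action) orbit_eq_singleton_iff:
  assumes "x \<in> E"
  shows "orbit G \<phi> x = {x} \<longleftrightarrow> (\<forall>g\<in>carrier G. \<phi> g x = x)"
  using orbit_refl[OF assms] unfolding orbit_def by blast

lemma (in group_action) singleton_orbits_eq:
  "{orb \<in> orbits G E \<phi>. card orb = 1} = (\<lambda>x. {x}) ` {x \<in> E. \<forall>g\<in>carrier G. \<phi> g x = x}"
proof (intro equalityI subsetI)
  fix orb assume "orb \<in> {orb \<in> orbits G E \<phi>. card orb = 1}"
  then obtain x where x: "x \<in> E" "orb = orbit G \<phi> x" "card orb = 1"
    unfolding orbits_def by blast
  then have "orb = {x}"
    using orbit_refl[OF x(1)] by (auto simp: card_1_singleton_iff)
  then show "orb \<in> (\<lambda>x. {x}) ` {x \<in> E. \<forall>g\<in>carrier G. \<phi> g x = x}"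
    using x orbit_eq_singleton_iff by auto
next
  fix orb assume "orb \<in> (\<lambda>x. {x}) ` {x \<in> E. \<forall>g\<in>carrier G. \<phi> g x = x}"
  then obtain x where "x \<in> E" "orbit G \<phi> x = {x}" "orb = {x}"
    using orbit_eq_singleton_iff by auto
  then show "orb \<in> {orb \<in> orbits G E \<phi>. card orb = 1}"
    unfolding orbits_def by auto
qed

text \<open>Orbits of a q-group have q-power size, so modulo q only the one-point orbits count.\<close>

lemma (in group_action) card_fixed_points_cong:
  assumes q: "Factorial_Ring.prime q" and order: "order G = q ^ k" and "finite E"
  shows "card E mod q = card {x \<in> E. \<forall>g\<in>carrier G. \<phi> g x = x} mod q"
proof -
  let ?F = "{x \<in> E. \<forall>g\<in>carrier G. \<phi> g x = x}"
  let ?singletons = "{orb \<in> orbits G E \<phi>. card orb = 1}"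
  have orbit_mod: "card orb mod q = (if card orb = 1 then 1 else 0)"
    if orb: "orb \<in> orbits G E \<phi>" for orb
  proof -
    obtain x where "x \<in> E" "orb = orbit G \<phi> x" using orb unfolding orbits_def by blast
    then have "card orb dvd q ^ k"
      using orbit_stabilizer_theorem order by (metis dvd_triv_left)
    then obtain i where "card orb = q ^ i" using divides_primepow_nat[OF q] by blast
    then show ?thesis using prime_gt_1_nat[OF q] by (cases i) auto
  qed
  have "card E = (\<Sum>orb\<in>orbits G E \<phi>. card orb)"
    using disjoint_sum[OF \<open>finite E\<close>, of "\<lambda>_. 1::nat"] by simp
  then have "card E mod q = (\<Sum>orb\<in>orbits G E \<phi>. card orb mod q) mod q"
    by (simp add: mod_sum_eq)
  also have "(\<Sum>orb\<in>orbits G E \<phi>. card orb mod q) =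
      (\<Sum>orb\<in>orbits G E \<phi>. if card orb = 1 then 1 else 0)"
    using orbit_mod by (rule sum.cong[OF refl])
  also have "\<dots> = card ?singletons"
    using \<open>finite E\<close> by (simp add: orbits_def sum.If_cases Int_def conj_commute)
  also have "?singletons = (\<lambda>x. {x}) ` ?F"
    by (rule singleton_orbits_eq)
  also have "card \<dots> = card ?F"
    by (simp add: card_image)
  finally show ?thesis .
qed

lemma (in group) card_fixed_points_cong_subgroup:
  assumes "Factorial_Ring.prime q" "subgroup W G" "card W = q ^ k" "finite E"
    and closed: "\<And>w x. w \<in> W \<Longrightarrow> x \<in> E \<Longrightarrow> \<phi> w x \<in> E"
    and one: "\<And>x. x \<in> E \<Longrightarrow> \<phi> \<one> x = x"
    and mult: "\<And>v w x. \<lbrakk>v \<in> W; w \<in> W; x \<in> E\<rbrakk> \<Longrightarrow> \<phi> (v \<otimes> w) x = \<phi> v (\<phi> w x)"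
  shows "card E mod q = card {x \<in> E. \<forall>w\<in>W. \<phi> w x = x} mod q"
proof -
  interpret W: group_action "G\<lparr>carrier := W\<rparr>" E "\<lambda>w. \<lambda>x\<in>E. \<phi> w x"
    using closed one mult subgroup_imp_group[OF \<open>subgroup W G\<close>] by (intro group_actionI) auto
  have "order (G\<lparr>carrier := W\<rparr>) = q ^ k" using \<open>card W = q ^ k\<close> by (simp add: order_def)
  from W.card_fixed_points_cong[OF \<open>Factorial_Ring.prime q\<close> this \<open>finite E\<close>] show ?thesis
    by (simp cong: conj_cong)
qed

section \<open>q-parts and \<pi>-numbers\<close>

lemma q_part_prime_power [simp]: "Factorial_Ring.prime (q::nat) \<Longrightarrow> q_part q (q ^ j) = q ^ j"
  by (simp add: q_part_def)

lemma q_part_mult_eq_iff: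
  assumes q: "Factorial_Ring.prime (q::nat)" and "e \<noteq> 0" "n \<noteq> 0"
  shows "q_part q (e * n) = q_part q n \<longleftrightarrow> \<not> q dvd e"
proof -
  have "multiplicity q (e * n) = multiplicity q e + multiplicity q n"
    using assms by (simp add: prime_elem_multiplicity_mult_distrib)
  moreover have "multiplicity q e = 0 \<longleftrightarrow> \<not> q dvd e"
    using assms by (simp add: prime_elem_multiplicity_eq_zero_iff)
  ultimately show ?thesis
    using prime_gt_1_nat[OF q] by (simp add: q_part_def power_inject_exp)
qed

lemma prime_power_dvd_q_part: "n \<noteq> 0 \<Longrightarrow> q ^ i dvd n \<Longrightarrow> q ^ i dvd q_part q n"
  unfolding q_part_def using multiplicity_dvd_iff_dvd[of n q i] by blast

lemma q_part_eq_of_q_part_dvd: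
  assumes q: "Factorial_Ring.prime (q::nat)" and "q_part q n dvd k" "k dvd n" "n \<noteq> 0"
  shows "q_part q k = q_part q n"
proof -
  have "k \<noteq> 0" using assms by auto
  have "multiplicity q n \<le> multiplicity q k"
    using power_dvd_iff_le_multiplicity[of k q] assms(2) \<open>k \<noteq> 0\<close> prime_gt_1_nat[OF q]
    by (simp add: q_part_def)
  moreover have "multiplicity q k \<le> multiplicity q n"
    using assms by (simp add: dvd_imp_multiplicity_le)
  ultimately show ?thesis by (simp add: q_part_def)
qed

lemma pi_number_dvd: "pi_number \<pi> n \<Longrightarrow> d dvd n \<Longrightarrow> pi_number \<pi> d"
  unfolding pi_number_def by (meson dvd_trans)

lemma pi_number_mult: "pi_number \<pi> a \<Longrightarrow> pi_number \<pi> b \<Longrightarrow> pi_number \<pi> (a * b)"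
  unfolding pi_number_def by (meson prime_dvd_mult_iff)

lemma pi_number_prime_power:
  assumes "Factorial_Ring.prime (q::nat)" "q \<in> \<pi>"
  shows "pi_number \<pi> (q ^ k)"
  using assms unfolding pi_number_def by (metis prime_dvd_power primes_dvd_imp_eq)

lemma pi_number_coprime:
  assumes "pi_number \<pi> a" "\<forall>p\<in>\<pi>. \<not> p dvd b"
  shows "coprime a b"
proof (rule ccontr)
  assume "\<not> coprime a b"
  then obtain p where "Factorial_Ring.prime p" "p dvd gcd a b"
    using prime_factor_nat coprime_iff_gcd_eq_1 by blast
  then show False using assms by (auto simp: pi_number_def)
qed

section \<open>Subgroups, centralizers and conjugacy classes\<close>

lemma (in group) inv_mult_cancel_left [simp]:
  "a \<in> carrier G \<Longrightarrow> x \<in> carrier G \<Longrightarrow> inv a \<otimes> (a \<otimes> x) = x"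
  by (simp add: m_assoc[symmetric])

lemma (in group) mult_inv_cancel_left [simp]:
  "a \<in> carrier G \<Longrightarrow> x \<in> carrier G \<Longrightarrow> a \<otimes> (inv a \<otimes> x) = x"
  by (simp add: m_assoc[symmetric])

lemma (in group) conj_eq_iff_commute:
  "x \<in> carrier G \<Longrightarrow> g \<in> carrier G \<Longrightarrow> x \<otimes> g \<otimes> inv x = g \<longleftrightarrow> x \<otimes> g = g \<otimes> x"
  by (simp add: inv_solve_right')

lemma (in group) inv_commute:
  assumes "a \<in> carrier G" "x \<in> carrier G" "a \<otimes> x = x \<otimes> a"
  shows "inv a \<otimes> x = x \<otimes> inv a"
proof -
  have "inv a \<otimes> x = inv a \<otimes> (x \<otimes> a) \<otimes> inv a" using assms by (simp add: m_assoc)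
  also have "\<dots> = inv a \<otimes> (a \<otimes> x) \<otimes> inv a" using assms by simp
  also have "\<dots> = x \<otimes> inv a" using assms(1,2) by (simp add: m_assoc)
  finally show ?thesis .
qed

lemma (in group) conjugates_commute:
  assumes "a \<in> carrier G" "x \<in> carrier G" "r \<in> carrier G" "x \<otimes> r = r \<otimes> x"
  shows "(a \<otimes> x \<otimes> inv a) \<otimes> (a \<otimes> r \<otimes> inv a) = (a \<otimes> r \<otimes> inv a) \<otimes> (a \<otimes> x \<otimes> inv a)"
proof -
  have "(a \<otimes> x \<otimes> inv a) \<otimes> (a \<otimes> r \<otimes> inv a) = a \<otimes> (x \<otimes> r) \<otimes> inv a"
    using assms(1-3) by (simp add: m_assoc)
  also have "\<dots> = (a \<otimes> r \<otimes> inv a) \<otimes> (a \<otimes> x \<otimes> inv a)"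
    using assms by (simp add: m_assoc)
  finally show ?thesis .
qed

lemma (in group) centralizer_subgroup:
  assumes "W \<subseteq> carrier G"
  shows "subgroup (centralizer G W) G"
proof (rule subgroupI)
  have "\<one> \<in> centralizer G W" using assms by (auto simp: centralizer_def)
  then show "centralizer G W \<noteq> {}" by blast
next
  fix a b assume a: "a \<in> centralizer G W" and b: "b \<in> centralizer G W"
  then show "inv a \<in> centralizer G W"
    using assms inv_commute by (auto simp: centralizer_def)
  have "a \<otimes> b \<otimes> s = s \<otimes> (a \<otimes> b)" if "s \<in> W" for s
  proof -
    have carr: "a \<in> carrier G" "b \<in> carrier G" "s \<in> carrier G"
      and comm: "a \<otimes> s = s \<otimes> a" "b \<otimes> s = s \<otimes> b"
      using a b that assms by (auto simp: centralizer_def)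
    have "a \<otimes> b \<otimes> s = (a \<otimes> s) \<otimes> b" using carr comm(2) by (simp add: m_assoc)
    also have "\<dots> = s \<otimes> (a \<otimes> b)" using carr comm(1) by (simp add: m_assoc)
    finally show ?thesis .
  qed
  then show "a \<otimes> b \<in> centralizer G W"
    using a b by (auto simp: centralizer_def)
qed (auto simp: centralizer_def)

lemma (in group) card_subgroup_dvd:
  assumes "subgroup A G" "subgroup B G" "A \<subseteq> B"
  shows "card A dvd card B"
proof -
  interpret B: group "G\<lparr>carrier := B\<rparr>" using subgroup_imp_group assms(2) .
  have "card (rcosets\<^bsub>G\<lparr>carrier := B\<rparr>\<^esub> A) * card A = card B"
    using B.lagrange subgroup_incl[OF assms] by (simp add: order_def)
  then show ?thesis by (metis dvd_triv_right)
qed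

lemma (in group) card_subgroup_ne_0: "finite (carrier G) \<Longrightarrow> subgroup H G \<Longrightarrow> card H \<noteq> 0"
  by (metis card_0_eq empty_iff finite_subset subgroup.one_closed subgroup.subset)

lemma (in group) ord_dvd_card_subgroup:
  assumes "subgroup H G" "x \<in> H"
  shows "ord x dvd card H"
proof -
  have x: "x \<in> carrier G" by (rule subgroup.mem_carrier[OF assms])
  have "generate G {x} \<subseteq> H"
    by (rule generate_subgroup_incl) (use assms in auto)
  then have "card (generate G {x}) dvd card H"
    using card_subgroup_dvd[OF generate_is_subgroup assms(1)] x by simp
  then show ?thesis using generate_pow_card[OF x] by simp
qed

lemma (in group) card_union_of_rcosets:
  assumes Z: "subgroup Z G" and "finite T" "T \<subseteq> carrier G"
    and closed: "\<And>t. t \<in> T \<Longrightarrow> Z #> t \<subseteq> T"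
  shows "card T = card {Z #> t | t. t \<in> T} * card Z"
proof -
  let ?E = "{Z #> t | t. t \<in> T}"
  have E_rcosets: "?E \<subseteq> rcosets Z"
    using \<open>T \<subseteq> carrier G\<close> by (auto intro: rcosetsI[OF subgroup.subset[OF Z]])
  have "\<Union>?E = T"
    using closed rcos_self[OF _ Z] \<open>T \<subseteq> carrier G\<close> by blast
  moreover have "finite Y" if "Y \<in> ?E" for Y
    using that closed \<open>finite T\<close> finite_subset by blast
  ultimately have "card T = sum card ?E"
    using card_Union_disjoint[OF pairwise_subset[OF rcos_disjoint[OF Z] E_rcosets]] by simp
  also have "\<dots> = (\<Sum>Y\<in>?E. card Z)"
    using E_rcosets card_rcosets_equal[OF _ subgroup.subset[OF Z]] by (intro sum.cong) auto
  also have "\<dots> = card ?E * card Z" by simp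
  finally show ?thesis .
qed

lemma (in group) mem_subgroup_if_coprime_powers:
  assumes "subgroup H G" "g \<in> carrier G" "g [^] (m::nat) \<in> H" "g [^] (n::nat) \<in> H" "coprime m n"
  shows "g \<in> H"
proof -
  obtain u v :: int where uv: "u * int m + v * int n = 1"
    using bezout_int[of "int m" "int n"] \<open>coprime m n\<close> by (auto simp: coprime_iff_gcd_eq_1)
  have "g = g [^] (u * int m + v * int n)"
    using uv \<open>g \<in> carrier G\<close> by simp
  also have "\<dots> = (g [^] m) [^] u \<otimes> (g [^] n) [^] v"
    using \<open>g \<in> carrier G\<close> by (simp add: int_pow_mult int_pow_pow mult.commute flip: int_pow_int)
  finally show ?thesis
    using assms subgroup_int_pow_closed subgroup.m_closed by metis
qed

lemma (in group) conj_pow: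
  assumes "x \<in> carrier G" "g \<in> carrier G"
  shows "(x \<otimes> g \<otimes> inv x) [^] (n::nat) = x \<otimes> g [^] n \<otimes> inv x"
proof (induction n)
  case (Suc n)
  then show ?case using assms by (simp add: m_assoc)
qed (use assms in simp)

lemma (in group) ord_conj:
  assumes "x \<in> carrier G" "g \<in> carrier G"
  shows "ord (x \<otimes> g \<otimes> inv x) = ord g"
proof -
  have "(x \<otimes> g \<otimes> inv x) [^] n = \<one> \<longleftrightarrow> g [^] n = \<one>" for n :: nat
    using assms by (simp add: conj_pow inv_solve_right')
  then show ?thesis using assms by (simp add: ord_unique pow_eq_id)
qed

lemma (in group) conj_class_conj:
  assumes "x \<in> carrier G" "g \<in> carrier G"
  shows "conj_class G (x \<otimes> g \<otimes> inv x) = conj_class G g"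
proof (intro equalityI subsetI)
  fix a assume "a \<in> conj_class G (x \<otimes> g \<otimes> inv x)"
  then obtain y where y: "y \<in> carrier G" "a = y \<otimes> (x \<otimes> g \<otimes> inv x) \<otimes> inv y"
    unfolding conj_class_def by blast
  then have "a = (y \<otimes> x) \<otimes> g \<otimes> inv (y \<otimes> x)"
    using assms by (simp add: m_assoc inv_mult_group)
  then show "a \<in> conj_class G g"
    unfolding conj_class_def using y(1) assms(1) by blast
next
  fix a assume "a \<in> conj_class G g"
  then obtain y where y: "y \<in> carrier G" "a = y \<otimes> g \<otimes> inv y"
    unfolding conj_class_def by blast
  then have "a = (y \<otimes> inv x) \<otimes> (x \<otimes> g \<otimes> inv x) \<otimes> inv (y \<otimes> inv x)"
    using assms by (simp add: m_assoc inv_mult_group)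
  then show "a \<in> conj_class G (x \<otimes> g \<otimes> inv x)"
    unfolding conj_class_def using y(1) assms(1) by blast
qed

lemma (in group) card_conj_class_mult_card_centralizer:
  assumes "g \<in> carrier G"
  shows "card (conj_class G g) * card (centralizer G {g}) = order G"
proof -
  interpret group_action G "carrier G" "\<lambda>x. \<lambda>h\<in>carrier G. x \<otimes> h \<otimes> inv x"
    by (rule action_by_conjugation)
  have "orbit G (\<lambda>x. \<lambda>h\<in>carrier G. x \<otimes> h \<otimes> inv x) g = conj_class G g"
    using assms by (simp add: orbit_def conj_class_def)
  moreover have "stabilizer G (\<lambda>x. \<lambda>h\<in>carrier G. x \<otimes> h \<otimes> inv x) g = centralizer G {g}"
    using assms by (auto simp: stabilizer_def centralizer_def conj_eq_iff_commute[symmetric])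
  ultimately show ?thesis
    using orbit_stabilizer_theorem[OF assms] by simp
qed

lemma (in group) card_conj_class_pow_dvd:
  assumes "finite (carrier G)" "g \<in> carrier G"
  shows "card (conj_class G (g [^] (n::nat))) dvd card (conj_class G g)"
proof -
  have "centralizer G {g} \<subseteq> centralizer G {g [^] n}"
    using assms(2) group_commutes_pow by (auto simp: centralizer_def)
  then have "card (centralizer G {g}) dvd card (centralizer G {g [^] n})"
    using card_subgroup_dvd[OF centralizer_subgroup centralizer_subgroup] assms(2) by simp
  then obtain k where k: "card (centralizer G {g [^] n}) = card (centralizer G {g}) * k"
    by (elim dvdE)
  have "card (conj_class G g) * card (centralizer G {g})
      = card (conj_class G (g [^] n)) * k * card (centralizer G {g})"
    using card_conj_class_mult_card_centralizer[of g]
      card_conj_class_mult_card_centralizer[of "g [^] n"]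
      assms(2) k by (simp add: mult_ac)
  moreover have "card (centralizer G {g}) \<noteq> 0"
    using card_subgroup_ne_0[OF assms(1) centralizer_subgroup] assms(2) by simp
  ultimately show ?thesis by simp
qed

lemma (in group) q_part_card_centralizer_eq_iff:
  assumes "finite (carrier G)" "Factorial_Ring.prime q" "g \<in> carrier G"
  shows "q_part q (card (centralizer G {g})) = q_part q (order G) \<longleftrightarrow>
    \<not> q dvd card (conj_class G g)"
proof -
  have "order G \<noteq> 0" using assms by (auto simp: order_def)
  then have "card (conj_class G g) \<noteq> 0" "card (centralizer G {g}) \<noteq> 0"
    using card_conj_class_mult_card_centralizer[OF assms(3)] by (metis mult_is_0)+
  then show ?thesis
    using q_part_mult_eq_iff[OF assms(2)] card_conj_class_mult_card_centralizer[OF assms(3)]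
    by metis
qed

section \<open>Normal Hall subgroups\<close>

lemma (in group) normal_in_imp_normal:
  assumes "subgroup H G" "subgroup C G" "normal_in G H C"
  shows "H \<lhd> G\<lparr>carrier := C\<rparr>"
proof -
  interpret C: group "G\<lparr>carrier := C\<rparr>" using subgroup_imp_group assms(2) .
  have "H \<subseteq> C" using assms(3) by (simp add: normal_in_def)
  then show ?thesis
    using assms subgroup_incl m_inv_consistent[OF assms(2)]
    by (simp add: C.normal_inv_iff normal_in_def)
qed

text \<open>The image of h in C/H has order dividing |C : H|, so h^|C : H| \<in> H; since |C : H| is
  coprime to the \<pi>-number ord h, this forces h \<in> H.\<close>

lemma (in group) pi_element_in_normal_hall_subgroup:
  assumes fin: "finite (carrier G)" and C: "subgroup C G"
    and hall: "hall_subgroup G \<pi> C H" and normal: "normal_in G H C"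
    and h: "h \<in> C" "pi_number \<pi> (ord h)"
  shows "h \<in> H"
proof -
  let ?C = "G\<lparr>carrier := C\<rparr>"
  have H: "subgroup H G" and \<pi>': "\<forall>p\<in>\<pi>. \<not> p dvd card C div card H"
    using hall by (auto simp: hall_subgroup_def)
  interpret C: group ?C using subgroup_imp_group C .
  interpret normal H ?C using normal_in_imp_normal[OF H C normal] .
  interpret F: group "?C Mod H" by (rule factorgroup_is_group)
  have hG: "h \<in> carrier G" using subgroup.mem_carrier[OF C h(1)] .
  have "card H \<noteq> 0" using card_subgroup_ne_0[OF fin H] .
  moreover have "card (rcosets\<^bsub>?C\<^esub> H) * card H = card C"
    using C.lagrange[OF subgroup_axioms] by (simp add: order_def)
  ultimately have order_F: "order (?C Mod H) = card C div card H"
    by (simp add: order_def FactGroup_def flip: \<open>card (rcosets\<^bsub>?C\<^esub> H) * card H = card C\<close>)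
  have "H #>\<^bsub>?C\<^esub> h \<in> carrier (?C Mod H)"
    using h(1) by (simp add: carrier_FactGroup)
  then have "(H #>\<^bsub>?C\<^esub> h) [^]\<^bsub>?C Mod H\<^esub> (card C div card H) = H"
    using F.pow_order_eq_1 order_F by simp
  then have "H #>\<^bsub>?C\<^esub> (h [^]\<^bsub>?C\<^esub> (card C div card H)) = H"
    using FactGroup_pow h(1) by simp
  then have "H #> h [^] (card C div card H) = H"
    by (simp add: r_coset_def flip: nat_pow_consistent)
  then have "h [^] (card C div card H) \<in> H"
    using rcos_self[OF _ H] hG by (metis nat_pow_closed)
  moreover have "h [^] ord h \<in> H" using H hG subgroup.one_closed by simp
  moreover have "coprime (ord h) (card C div card H)"
    using pi_number_coprime[OF h(2) \<pi>'] .
  ultimately show ?thesis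
    using mem_subgroup_if_coprime_powers[OF H hG] coprime_commute by blast
qed

section \<open>Sylow subgroups\<close>

lemma (in group) exists_sylow_subgroup_of_subgroup:
  assumes fin: "finite (carrier G)" and q: "Factorial_Ring.prime q" and K: "subgroup K G"
  shows "\<exists>R. subgroup R G \<and> R \<subseteq> K \<and> card R = q_part q (card K)"
proof -
  interpret K: group "G\<lparr>carrier := K\<rparr>" using subgroup_imp_group K .
  have "order (G\<lparr>carrier := K\<rparr>) = q_part q (card K) * (card K div q_part q (card K))"
    by (simp add: order_def q_part_def multiplicity_dvd)
  then obtain R where R: "subgroup R (G\<lparr>carrier := K\<rparr>)" "card R = q_part q (card K)"
    using sylow_thm[OF q K.is_group] fin finite_subset[OF subgroup.subset[OF K]]
    unfolding q_part_def by auto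
  moreover have "subgroup R G" by (rule incl_subgroup[OF K R(1)])
  moreover have "R \<subseteq> K" using subgroup.subset[OF R(1)] by simp
  ultimately show ?thesis by blast
qed

lemma (in group) card_rcosets_of_sylow_not_dvd:
  assumes fin: "finite (carrier G)" and q: "Factorial_Ring.prime q" and K: "subgroup K G"
    and P: "subgroup P G" "P \<subseteq> K" "card P = q_part q (card K)"
  shows "\<not> q dvd card {P #> k | k. k \<in> K}"
proof -
  let ?E = "{P #> k | k. k \<in> K}"
  have KG: "K \<subseteq> carrier G" using subgroup.subset[OF K] .
  have "finite K" using fin KG finite_subset by blast
  have "P #> k \<subseteq> K" if "k \<in> K" for k
    using P(2) that by (auto simp: r_coset_def intro: subgroup.m_closed[OF K])
  then have card_K: "card K = card ?E * card P"
    using card_union_of_rcosets[OF P(1) \<open>finite K\<close> KG] by blast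
  then have "card ?E \<noteq> 0" "card P \<noteq> 0" using card_subgroup_ne_0[OF fin K] by auto
  moreover have "q_part q (card P) = card P"
    using P(3) q by (simp add: q_part_def)
  then have "q_part q (card ?E * card P) = q_part q (card P)"
    using card_K P(3) by metis
  ultimately show ?thesis using q_part_mult_eq_iff[OF q] by blast
qed

lemma (in group) exists_rcoset_fixed_by_q_subgroup:
  assumes q: "Factorial_Ring.prime q" and K: "subgroup K G" "finite K"
    and P: "subgroup P G" "P \<subseteq> K" "\<not> q dvd card {P #> k | k. k \<in> K}"
    and W: "subgroup W G" "W \<subseteq> K" "card W = q ^ i"
  shows "\<exists>a\<in>K. \<forall>w\<in>W. P #> a #> inv w = P #> a"
proof -
  let ?E = "{P #> k | k. k \<in> K}"
  define F where "F = {T \<in> ?E. \<forall>w\<in>W. T #> inv w = T}"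
  have KG: "K \<subseteq> carrier G" and PG: "P \<subseteq> carrier G" using K P subgroup.subset by auto
  have WG: "w \<in> carrier G" "inv w \<in> K" if "w \<in> W" for w
    using that W(2) KG subgroup.m_inv_closed[OF K(1)] by auto
  have "card ?E mod q = card F mod q"
    unfolding F_def
  proof (rule card_fixed_points_cong_subgroup[OF q W(1) W(3)])
    show "finite ?E" using K(2) by simp
  next
    fix w T assume "w \<in> W" "T \<in> ?E"
    then obtain k where "k \<in> K" "T = P #> k" by blast
    then have "T #> inv w = P #> (k \<otimes> inv w)" "k \<otimes> inv w \<in> K"
      using coset_mult_assoc PG KG WG[OF \<open>w \<in> W\<close>] subgroup.m_closed[OF K(1)] by auto
    then show "T #> inv w \<in> ?E" by blast
  next
    fix T assume "T \<in> ?E"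
    then show "T #> inv \<one> = T" using PG KG r_coset_subset_G by auto
  next
    fix v w T assume "v \<in> W" "w \<in> W" "T \<in> ?E"
    then obtain k where "k \<in> K" "T = P #> k" by blast
    moreover have "k \<in> carrier G" "v \<in> carrier G" "w \<in> carrier G"
      using \<open>k \<in> K\<close> KG WG \<open>v \<in> W\<close> \<open>w \<in> W\<close> by auto
    ultimately show "T #> inv (v \<otimes> w) = T #> inv w #> inv v"
      using PG by (simp add: coset_mult_assoc inv_mult_group m_assoc)
  qed
  with P(3) have "\<not> q dvd card F"
    by (simp add: dvd_eq_mod_eq_0)
  then have "F \<noteq> {}" by (intro notI) simp
  then show ?thesis unfolding F_def by blast
qed

text \<open>The Sylow argument: W acts on the right cosets of P in K by T \<mapsto> T w\<inverse>, their number is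
  prime to q, and a fixed coset P a yields a W a\<inverse> \<subseteq> P.\<close>

lemma (in group) q_subgroup_conj_into_sylow:
  assumes fin: "finite (carrier G)" and q: "Factorial_Ring.prime q" and K: "subgroup K G"
    and P: "subgroup P G" "P \<subseteq> K" "card P = q_part q (card K)"
    and W: "subgroup W G" "W \<subseteq> K" "card W = q ^ i"
  shows "\<exists>a\<in>K. \<forall>w\<in>W. a \<otimes> w \<otimes> inv a \<in> P"
proof -
  have KG: "K \<subseteq> carrier G" using subgroup.subset[OF K] .
  have "finite K" using fin KG finite_subset by blast
  obtain a where a: "a \<in> K" "\<forall>w\<in>W. P #> a #> inv w = P #> a"
    using exists_rcoset_fixed_by_q_subgroup[OF q K \<open>finite K\<close> P(1,2) _ W]
      card_rcosets_of_sylow_not_dvd[OF fin q K P] by blast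
  have "a \<otimes> w \<otimes> inv a \<in> P" if w: "w \<in> W" for w
  proof -
    have aG: "a \<in> carrier G" and wG: "w \<in> carrier G"
      using a(1) w W(2) KG by auto
    have "P #> a #> inv (inv w) = P #> a"
      using a(2) subgroup.m_inv_closed[OF W(1) w] by blast
    then have "P #> a = P #> (a \<otimes> w)"
      using subgroup.subset[OF P(1)] aG wG by (simp add: coset_mult_assoc)
    then have "a \<otimes> w \<in> P #> a" using repr_independenceD[OF P(1)] aG wG by blast
    then show ?thesis using subgroup.rcos_module_imp[OF P(1) is_group aG] by simp
  qed
  then show ?thesis using a(1) by blast
qed

lemma (in group) sylow_subgroups_conjugate:
  assumes fin: "finite (carrier G)" and q: "Factorial_Ring.prime q"
    and P: "subgroup P G" "card P = q_part q (order G)"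
    and Q: "subgroup Q G" "card Q = q_part q (order G)"
  shows "\<exists>a\<in>carrier G. (\<lambda>p. a \<otimes> p \<otimes> inv a) ` P = Q"
proof -
  obtain a where a: "a \<in> carrier G" "\<forall>p\<in>P. a \<otimes> p \<otimes> inv a \<in> Q"
    using q_subgroup_conj_into_sylow[OF fin q subgroup_self Q(1) _ _ P(1),
        where i = "multiplicity q (order G)"] P(2) Q(2)
      subgroup.subset[OF P(1)] subgroup.subset[OF Q(1)]
    by (auto simp: order_def q_part_def)
  have "inj_on (\<lambda>p. a \<otimes> p \<otimes> inv a) P"
    using a(1) subgroup.mem_carrier[OF P(1)] by (auto intro!: inj_onI)
  then have "card ((\<lambda>p. a \<otimes> p \<otimes> inv a) ` P) = card Q"
    using P(2) Q(2) by (simp add: card_image)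
  moreover have "finite Q" using fin subgroup.subset[OF Q(1)] finite_subset by blast
  ultimately have "(\<lambda>p. a \<otimes> p \<otimes> inv a) ` P = Q"
    using a(2) by (metis card_subset_eq image_subsetI)
  then show ?thesis using a(1) by blast
qed

text \<open>Inside the centralizer K of x, P is still a Sylow subgroup; an element of K conjugating the
  q-group generated by x into P fixes x.\<close>

lemma (in group) q_element_in_centralizing_sylow:
  assumes fin: "finite (carrier G)" and q: "Factorial_Ring.prime q"
    and x: "x \<in> carrier G" "ord x dvd q ^ e"
    and P: "subgroup P G" "card P = q_part q (order G)"
    and comm: "\<forall>p\<in>P. x \<otimes> p = p \<otimes> x"
  shows "x \<in> P"
proof -
  let ?K = "centralizer G {x}"
  have K: "subgroup ?K G" using centralizer_subgroup x(1) by simp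
  have PK: "P \<subseteq> ?K" using comm subgroup.subset[OF P(1)] by (auto simp: centralizer_def)
  have "order G \<noteq> 0" using fin x(1) by (auto simp: order_def)
  then have card_P: "card P = q_part q (card ?K)"
    using q_part_eq_of_q_part_dvd[OF q] P(2) card_subgroup_dvd[OF P(1) K PK]
      card_subgroup_dvd[OF K subgroup_self] subgroup.subset[OF K] by (simp add: order_def)
  obtain i where card_W: "card (generate G {x}) = q ^ i"
    using x divides_primepow_nat[OF q] generate_pow_card by metis
  have WK: "generate G {x} \<subseteq> ?K"
    using x(1) by (intro generate_subgroup_incl[OF _ K]) (auto simp: centralizer_def)
  have "\<exists>a\<in>?K. \<forall>w\<in>generate G {x}. a \<otimes> w \<otimes> inv a \<in> P"
    by (rule q_subgroup_conj_into_sylow[OF fin q K P(1) PK _ generate_is_subgroup])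
      (use card_P card_W WK x(1) in auto)
  then obtain a where "a \<in> ?K" "\<forall>w\<in>generate G {x}. a \<otimes> w \<otimes> inv a \<in> P" ..
  then have "a \<otimes> x \<otimes> inv a \<in> P" using generate.incl[of x "{x}" G] by auto
  moreover have "a \<in> carrier G" "a \<otimes> x = x \<otimes> a"
    using \<open>a \<in> ?K\<close> by (auto simp: centralizer_def)
  then have "a \<otimes> x \<otimes> inv a = x" using x(1) conj_eq_iff_commute by blast
  ultimately show ?thesis by simp
qed

lemma (in group) not_dvd_card_conj_class_if_sylow_centralizes:
  assumes fin: "finite (carrier G)" and q: "Factorial_Ring.prime q" and g: "g \<in> carrier G"
    and P: "subgroup P G" "card P = q_part q (order G)" "P \<subseteq> centralizer G {g}"
  shows "\<not> q dvd card (conj_class G g)"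
proof -
  have K: "subgroup (centralizer G {g}) G" using centralizer_subgroup g by simp
  have "order G \<noteq> 0" using fin g by (auto simp: order_def)
  then have "q_part q (card (centralizer G {g})) = q_part q (order G)"
    using q_part_eq_of_q_part_dvd[OF q] P card_subgroup_dvd[OF P(1) K P(3)]
      card_subgroup_dvd[OF K subgroup_self] subgroup.subset[OF K] by (simp add: order_def)
  then show ?thesis using q_part_card_centralizer_eq_iff[OF fin q g] by simp
qed

section \<open>A Sylow subgroup with central centre\<close>

locale central_sylow_hall = group G for G (structure) +
  fixes \<pi> :: "nat set" and q :: nat and Q H :: "'a set"
  assumes finite_carrier: "finite (carrier G)"
    and prime_q: "Factorial_Ring.prime q" and q_in_pi: "q \<in> \<pi>"
    and sylow: "sylow_subgroup G q Q"
    and center_sylow_central: "center (G\<lparr>carrier := Q\<rparr>) \<subseteq> center G"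
    and hall: "hall_subgroup G \<pi> (centralizer G Q) H"
    and normal_hall: "normal_in G H (centralizer G Q)"
begin

abbreviation "Z \<equiv> center (G\<lparr>carrier := Q\<rparr>)"
abbreviation "C \<equiv> centralizer G Q"
abbreviation "S \<equiv> S_qprime_pi G \<pi> q"

lemma Q_subgroup: "subgroup Q G" and card_Q: "card Q = q_part q (order G)"
  using sylow by (auto simp: sylow_subgroup_def)

lemma C_subgroup: "subgroup C G"
  using centralizer_subgroup subgroup.subset[OF Q_subgroup] .

lemma H_subgroup: "subgroup H G" and H_subset_C: "H \<subseteq> C"
  and pi_number_card_H: "pi_number \<pi> (card H)"
  using hall by (auto simp: hall_subgroup_def)

lemma Z_eq: "Z = Q \<inter> C"
  using subgroup.subset[OF Q_subgroup] by (auto simp: center_def centralizer_def)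

lemma Z_subgroup: "subgroup Z G"
  unfolding Z_eq using subgroups_Inter_pair[OF Q_subgroup C_subgroup] .

lemma Z_central: "z \<in> Z \<Longrightarrow> g \<in> carrier G \<Longrightarrow> z \<otimes> g = g \<otimes> z"
  using center_sylow_central by (auto simp: center_def centralizer_def)

lemma ord_dvd_of_mem_Q: "x \<in> Q \<Longrightarrow> ord x dvd q ^ multiplicity q (order G)"
  using ord_dvd_card_subgroup[OF Q_subgroup] card_Q by (simp add: q_part_def)

lemma q_part_card_Z: "q_part q (card Z) = card Z"
proof -
  have "card Z dvd q ^ multiplicity q (order G)"
    using card_subgroup_dvd[OF Z_subgroup Q_subgroup] card_Q by (simp add: Z_eq q_part_def)
  then show ?thesis using divides_primepow_nat[OF prime_q] prime_q by auto
qed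

lemma mem_H_of_pi_element: "h \<in> C \<Longrightarrow> pi_number \<pi> (ord h) \<Longrightarrow> h \<in> H"
  using pi_element_in_normal_hall_subgroup[OF finite_carrier C_subgroup hall normal_hall] .

lemma Z_subset_H: "Z \<subseteq> H"
proof
  fix z assume "z \<in> Z"
  then have "pi_number \<pi> (ord z)"
    using ord_dvd_of_mem_Q pi_number_prime_power[OF prime_q q_in_pi] pi_number_dvd
    unfolding Z_eq by blast
  then show "z \<in> H" using mem_H_of_pi_element \<open>z \<in> Z\<close> unfolding Z_eq by blast
qed

lemma q_element_of_C_in_Z:
  assumes "x \<in> C" "ord x dvd q ^ e"
  shows "x \<in> Z"
proof -
  have "x \<in> Q"
    using q_element_in_centralizing_sylow[OF finite_carrier prime_q _ assms(2) Q_subgroup card_Q]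
      assms(1) by (auto simp: centralizer_def)
  then show ?thesis using assms(1) Z_eq by blast
qed

text \<open>A Sylow q-subgroup of T consists of q-elements of C, hence lies in Z.\<close>

lemma q_part_card_subgroup_between:
  assumes T: "subgroup T G" "Z \<subseteq> T" "T \<subseteq> C"
  shows "q_part q (card T) = card Z"
proof -
  obtain R where R: "subgroup R G" "R \<subseteq> T" "card R = q_part q (card T)"
    using exists_sylow_subgroup_of_subgroup[OF finite_carrier prime_q T(1)] by blast
  have "R \<subseteq> Z"
  proof
    fix r assume "r \<in> R"
    then have "ord r dvd q ^ multiplicity q (card T)"
      using ord_dvd_card_subgroup[OF R(1)] R(3) by (simp add: q_part_def)
    then show "r \<in> Z" using q_element_of_C_in_Z \<open>r \<in> R\<close> R(2) T(3) by blast
  qed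
  then have "card R dvd card Z" using card_subgroup_dvd[OF R(1) Z_subgroup] by simp
  moreover have "card T \<noteq> 0" using card_subgroup_ne_0[OF finite_carrier T(1)] .
  then have "card Z dvd card R"
    using card_subgroup_dvd[OF Z_subgroup T(1,2)] q_part_card_Z R(3)
      prime_power_dvd_q_part[of "card T" q "multiplicity q (card Z)"] by (simp add: q_part_def)
  ultimately show ?thesis using R(3) by (simp add: dvd_antisym)
qed

lemma q_part_card_center: "q_part q (card (center G)) = card Z"
proof (rule q_part_card_subgroup_between)
  show "subgroup (center G) G" unfolding center_def by (rule centralizer_subgroup) simp
  show "Z \<subseteq> center G" by (rule center_sylow_central)
  show "center G \<subseteq> C"
    using subgroup.subset[OF Q_subgroup] by (auto simp: center_def centralizer_def)
qed

text \<open>x lies in a Sylow q-subgroup R of its centralizer, which is also Sylow in G. Conjugating R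
  onto Q moves x into Z(Q) \<subseteq> Z(G), so x was central already.\<close>

lemma q_element_in_Z_of_class_not_dvd:
  assumes x: "x \<in> carrier G" "ord x dvd q ^ e" and not_dvd: "\<not> q dvd card (conj_class G x)"
  shows "x \<in> Z"
proof -
  let ?K = "centralizer G {x}"
  have K: "subgroup ?K G" using centralizer_subgroup x(1) by simp
  obtain R where R: "subgroup R G" "R \<subseteq> ?K" "card R = q_part q (card ?K)"
    using exists_sylow_subgroup_of_subgroup[OF finite_carrier prime_q K] by blast
  have card_R: "card R = q_part q (order G)"
    using R(3) q_part_card_centralizer_eq_iff[OF finite_carrier prime_q x(1)] not_dvd by simp
  have comm: "x \<otimes> r = r \<otimes> x" if "r \<in> R" for r
    using that R(2) by (auto simp: centralizer_def)
  then have "x \<in> R"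
    using q_element_in_centralizing_sylow[OF finite_carrier prime_q x R(1) card_R] by blast
  obtain a where a: "a \<in> carrier G" "(\<lambda>r. a \<otimes> r \<otimes> inv a) ` R = Q"
    using sylow_subgroups_conjugate[OF finite_carrier prime_q R(1) card_R Q_subgroup card_Q]
    by blast
  define y where "y = a \<otimes> x \<otimes> inv a"
  have "y \<in> C"
  proof -
    have "y \<otimes> s = s \<otimes> y" if "s \<in> Q" for s
    proof -
      obtain r where "r \<in> R" "s = a \<otimes> r \<otimes> inv a" using \<open>s \<in> Q\<close> a(2) by blast
      then show ?thesis
        unfolding y_def
        using conjugates_commute[OF a(1) x(1) subgroup.mem_carrier[OF R(1)] comm] by simp
    qed
    then show ?thesis using a(1) x(1) by (auto simp: y_def centralizer_def)
  qed
  moreover have "y \<in> Q" using \<open>x \<in> R\<close> a(2) y_def by blast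
  ultimately have "y \<in> Z" using Z_eq by blast
  then have "y \<otimes> a = a \<otimes> y" using Z_central a(1) by blast
  moreover have "y \<otimes> a = a \<otimes> x" using a(1) x(1) by (simp add: y_def m_assoc)
  ultimately have "x = y"
    using a(1) x(1) subgroup.mem_carrier[OF Z_subgroup \<open>y \<in> Z\<close>] by simp
  then show ?thesis using \<open>y \<in> Z\<close> by simp
qed

lemma mem_S_iff:
  "g \<in> S \<longleftrightarrow> g \<in> carrier G \<and> pi_number \<pi> (ord g) \<and> \<not> q dvd card (conj_class G g)"
proof
  assume "g \<in> S"
  then obtain g0 where g0: "pi_element G \<pi> g0" "\<not> q dvd card (conj_class G g0)"
    "g \<in> conj_class G g0"
    unfolding S_qprime_pi_def by blast
  then obtain x where "x \<in> carrier G" "g = x \<otimes> g0 \<otimes> inv x" "g0 \<in> carrier G"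
    unfolding conj_class_def pi_element_def by blast
  then show "g \<in> carrier G \<and> pi_number \<pi> (ord g) \<and> \<not> q dvd card (conj_class G g)"
    using g0 conj_class_conj ord_conj by (simp add: pi_element_def)
next
  assume "g \<in> carrier G \<and> pi_number \<pi> (ord g) \<and> \<not> q dvd card (conj_class G g)"
  moreover have "g \<in> conj_class G g"
    using calculation unfolding conj_class_def by (auto intro!: exI[of _ \<one>])
  ultimately show "g \<in> S"
    unfolding S_qprime_pi_def pi_element_def by blast
qed

lemma conj_mem_S: "g \<in> S \<Longrightarrow> y \<in> carrier G \<Longrightarrow> y \<otimes> g \<otimes> inv y \<in> S"
  by (simp add: mem_S_iff conj_class_conj ord_conj)

lemma centralizer_mult_Z:
  assumes "z \<in> Z" "g \<in> carrier G"
  shows "centralizer G {z \<otimes> g} = centralizer G {g}"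
proof -
  have "x \<otimes> (z \<otimes> g) = z \<otimes> (g \<otimes> x) \<longleftrightarrow> x \<otimes> g = g \<otimes> x" if "x \<in> carrier G" for x
  proof -
    have "x \<otimes> (z \<otimes> g) = z \<otimes> (x \<otimes> g)"
      using assms that Z_central[of z x] subgroup.mem_carrier[OF Z_subgroup]
      by (simp add: m_assoc[symmetric])
    then show ?thesis using assms that subgroup.mem_carrier[OF Z_subgroup] by simp
  qed
  then show ?thesis
    using assms subgroup.mem_carrier[OF Z_subgroup] by (auto simp: centralizer_def m_assoc)
qed

lemma mult_mem_S:
  assumes "z \<in> Z" "g \<in> S"
  shows "z \<otimes> g \<in> S"
proof -
  have z: "z \<in> carrier G" "pi_number \<pi> (ord z)"
    using assms(1) Z_eq subgroup.mem_carrier[OF Z_subgroup] ord_dvd_of_mem_Q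
      pi_number_dvd pi_number_prime_power[OF prime_q q_in_pi] by blast+
  have g: "g \<in> carrier G" "pi_number \<pi> (ord g)" "\<not> q dvd card (conj_class G g)"
    using assms(2) mem_S_iff by auto
  have "pi_number \<pi> (ord (z \<otimes> g))"
    using ord_mul_divides[OF Z_central[OF assms(1) g(1)] z(1) g(1)] pi_number_mult[OF z(2) g(2)]
      pi_number_dvd by blast
  moreover have "card (conj_class G (z \<otimes> g)) = card (conj_class G g)"
  proof -
    have "card (conj_class G (z \<otimes> g)) * card (centralizer G {g}) =
        card (conj_class G g) * card (centralizer G {g})"
      using card_conj_class_mult_card_centralizer z(1) g(1) centralizer_mult_Z[OF assms(1) g(1)]
      by (metis m_closed)
    moreover have "card (centralizer G {g}) \<noteq> 0"
      using card_subgroup_ne_0[OF finite_carrier centralizer_subgroup] g(1) by simp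
    ultimately show ?thesis by simp
  qed
  ultimately show ?thesis using mem_S_iff z g by simp
qed

lemma H_subset_S: "H \<subseteq> S"
proof
  fix h assume "h \<in> H"
  then have h: "h \<in> carrier G" "h \<in> C" using H_subset_C subgroup.mem_carrier[OF H_subgroup] by auto
  have "pi_number \<pi> (ord h)"
    using ord_dvd_card_subgroup[OF H_subgroup \<open>h \<in> H\<close>] pi_number_card_H pi_number_dvd by blast
  moreover have "Q \<subseteq> centralizer G {h}"
    using h(2) subgroup.subset[OF Q_subgroup] by (auto simp: centralizer_def)
  then have "\<not> q dvd card (conj_class G h)"
    using not_dvd_card_conj_class_if_sylow_centralizes[OF finite_carrier prime_q h(1)]
      Q_subgroup card_Q
    by blast
  ultimately show "h \<in> S" using mem_S_iff h(1) by simp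
qed

lemma conj_rcoset_Z:
  assumes "y \<in> carrier G" "g \<in> carrier G"
  shows "(\<lambda>a. y \<otimes> a \<otimes> inv y) ` (Z #> g) = Z #> (y \<otimes> g \<otimes> inv y)"
proof -
  have "y \<otimes> (z \<otimes> g) \<otimes> inv y = z \<otimes> (y \<otimes> g \<otimes> inv y)" if "z \<in> Z" for z
  proof -
    have "z \<in> carrier G" using that subgroup.mem_carrier[OF Z_subgroup] by blast
    then show ?thesis
      using assms Z_central[OF that assms(1)] by (simp add: m_assoc[symmetric])
  qed
  then show ?thesis
    by (force simp: r_coset_def image_iff)
qed

text \<open>The commutator c = y g y\<inverse> g\<inverse> lies in the central q-group Z, so (y g y\<inverse>)^n = c^n g^n.
  Taking n = ord g shows that ord c divides (ord g)_q; taking n = (ord g)_q then shows that y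
  commutes with g^n.\<close>

lemma pow_q_part_in_C:
  assumes g: "g \<in> carrier G" and fixed: "\<forall>y\<in>Q. y \<otimes> g \<otimes> inv y \<in> Z #> g"
  shows "g [^] q_part q (ord g) \<in> C"
proof -
  let ?n = "q_part q (ord g)"
  have "g [^] ?n \<otimes> y = y \<otimes> g [^] ?n" if y: "y \<in> Q" for y
  proof -
    define c where "c = y \<otimes> g \<otimes> inv y \<otimes> inv g"
    have yG: "y \<in> carrier G" using subgroup.mem_carrier[OF Q_subgroup y] .
    have "c \<in> Z"
      unfolding c_def using subgroup.rcos_module_imp[OF Z_subgroup is_group g] fixed y by blast
    then have cG: "c \<in> carrier G" and cg: "c \<otimes> g = g \<otimes> c"
      using subgroup.mem_carrier[OF Z_subgroup] Z_central g by auto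
    have conj: "y \<otimes> g \<otimes> inv y = c \<otimes> g" using yG g by (simp add: c_def m_assoc)
    have conj_g_pow: "y \<otimes> g [^] k \<otimes> inv y = c [^] k \<otimes> g [^] k" for k :: nat
      using conj_pow[OF yG g, of k] pow_mult_distrib[OF cg cG g, of k] conj by simp
    have "ord g \<noteq> 0" using ord_ge_1[OF finite_carrier g] by simp
    have "c [^] ord g = \<one>" using conj_g_pow[of "ord g"] yG g cG by simp
    then have "ord c dvd ord g" using pow_eq_id[OF cG] by simp
    moreover obtain i where "ord c = q ^ i"
      using ord_dvd_of_mem_Q \<open>c \<in> Z\<close> Z_eq divides_primepow_nat[OF prime_q] by blast
    ultimately have "ord c dvd ?n" using prime_power_dvd_q_part \<open>ord g \<noteq> 0\<close> by metis
    then have "c [^] ?n = \<one>" using pow_eq_id[OF cG] by simp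
    then have "y \<otimes> g [^] ?n \<otimes> inv y = g [^] ?n" using conj_g_pow g by simp
    then show ?thesis using conj_eq_iff_commute yG g by simp
  qed
  then show ?thesis using g by (simp add: centralizer_def)
qed

text \<open>Split g into its q-part, which lies in Z \<subseteq> H, and its q'-part, which is a \<pi>-element of C and
  hence lies in H.\<close>

lemma mem_H_of_fixed_rcoset:
  assumes "g \<in> S" and fixed: "\<forall>y\<in>Q. Z #> (y \<otimes> g \<otimes> inv y) = Z #> g"
  shows "g \<in> H"
proof -
  have g: "g \<in> carrier G" "pi_number \<pi> (ord g)" "\<not> q dvd card (conj_class G g)"
    using \<open>g \<in> S\<close> mem_S_iff by auto
  let ?a = "q_part q (ord g)" and ?b = "ord g div q_part q (ord g)"
  have ord_g: "ord g = ?a * ?b" by (simp add: q_part_def multiplicity_dvd)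
  have "\<not> q dvd ?b"
    using multiplicity_decompose[of "ord g" q] prime_gt_1_nat[OF prime_q]
      ord_ge_1[OF finite_carrier g(1)] by (simp add: q_part_def)
  then have "coprime ?a ?b"
    using prime_imp_coprime[OF prime_q] by (simp add: q_part_def)
  have "y \<otimes> g \<otimes> inv y \<in> Z #> g" if "y \<in> Q" for y
  proof (rule repr_independenceD[OF Z_subgroup])
    show "y \<otimes> g \<otimes> inv y \<in> carrier G" using subgroup.mem_carrier[OF Q_subgroup that] g(1) by simp
    show "Z #> g = Z #> (y \<otimes> g \<otimes> inv y)" using fixed that by simp
  qed
  then have "g [^] ?a \<in> C" using pow_q_part_in_C[OF g(1)] by blast
  moreover have "(g [^] ?a) [^] ord g = \<one>"
    using g(1) by (metis mult.commute nat_pow_one nat_pow_pow pow_ord_eq_1)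
  then have "ord (g [^] ?a) dvd ord g" using pow_eq_id g(1) by simp
  then have "pi_number \<pi> (ord (g [^] ?a))" using g(2) pi_number_dvd by blast
  ultimately have "g [^] ?a \<in> H" using mem_H_of_pi_element by blast
  moreover have "g [^] ?b \<in> Z"
  proof (rule q_element_in_Z_of_class_not_dvd)
    show "g [^] ?b \<in> carrier G" using g(1) by simp
    show "ord (g [^] ?b) dvd q ^ multiplicity q (ord g)"
      using g(1) ord_g pow_eq_id[of "g [^] ?b" "q ^ multiplicity q (ord g)"]
      by (simp add: nat_pow_pow mult.commute q_part_def)
    show "\<not> q dvd card (conj_class G (g [^] ?b))"
      using g(3) card_conj_class_pow_dvd[OF finite_carrier g(1)] dvd_trans by blast
  qed
  then have "g [^] ?b \<in> H" using Z_subset_H by blast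
  ultimately show ?thesis
    using mem_subgroup_if_coprime_powers[OF H_subgroup g(1)] \<open>coprime ?a ?b\<close> by blast
qed

lemma fixed_rcoset_iff_mem_H:
  assumes "g \<in> S"
  shows "(\<forall>y\<in>Q. Z #> (y \<otimes> g \<otimes> inv y) = Z #> g) \<longleftrightarrow> g \<in> H"
proof
  show "g \<in> H" if "\<forall>y\<in>Q. Z #> (y \<otimes> g \<otimes> inv y) = Z #> g"
    using mem_H_of_fixed_rcoset[OF assms that] .
next
  assume "g \<in> H"
  then have "g \<in> carrier G" "g \<in> C" using H_subset_C subgroup.mem_carrier[OF H_subgroup] by auto
  have "y \<otimes> g \<otimes> inv y = g" if "y \<in> Q" for y
  proof -
    have "g \<otimes> y = y \<otimes> g" using \<open>g \<in> C\<close> that by (simp add: centralizer_def)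
    then show ?thesis
      using conj_eq_iff_commute[of y g] subgroup.mem_carrier[OF Q_subgroup that] \<open>g \<in> carrier G\<close>
      by simp
  qed
  then show "\<forall>y\<in>Q. Z #> (y \<otimes> g \<otimes> inv y) = Z #> g" by simp
qed

text \<open>Q acts by conjugation on the Z-cosets contained in S, fixing exactly those of elements of H.\<close>

lemma card_rcosets_S_cong: "card {Z #> g | g. g \<in> S} mod q = card {Z #> h | h. h \<in> H} mod q"
proof -
  let ?E = "{Z #> g | g. g \<in> S}"
  let ?conj = "\<lambda>y W. (\<lambda>a. y \<otimes> a \<otimes> inv y) ` W"
  have SG: "S \<subseteq> carrier G" using mem_S_iff by auto
  have QG: "y \<in> carrier G" if "y \<in> Q" for y using subgroup.mem_carrier[OF Q_subgroup that] .
  have conj_E: "?conj y (Z #> g) = Z #> (y \<otimes> g \<otimes> inv y)" if "y \<in> Q" "g \<in> S" for y g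
    using conj_rcoset_Z QG SG that by blast
  have EG: "W \<subseteq> carrier G" if "W \<in> ?E" for W
    using that SG r_coset_subset_G[OF subgroup.subset[OF Z_subgroup]] by blast
  have "card ?E mod q = card {W \<in> ?E. \<forall>y\<in>Q. ?conj y W = W} mod q"
  proof (rule card_fixed_points_cong_subgroup[OF prime_q Q_subgroup])
    show "card Q = q ^ multiplicity q (order G)" using card_Q by (simp add: q_part_def)
    show "finite ?E" using finite_subset[OF SG finite_carrier] by simp
    show "?conj y W \<in> ?E" if "y \<in> Q" "W \<in> ?E" for y W
      using that conj_E conj_mem_S QG by blast
    show "?conj \<one> W = W" if "W \<in> ?E" for W
    proof -
      have "?conj \<one> W = (\<lambda>a. a) ` W" using EG[OF that] by (intro image_cong) auto
      then show ?thesis by simp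
    qed
    show "?conj (y \<otimes> y') W = ?conj y (?conj y' W)" if "y \<in> Q" "y' \<in> Q" "W \<in> ?E" for y y' W
      unfolding image_image using EG[OF that(3)] QG[OF that(1)] QG[OF that(2)]
      by (intro image_cong) (auto simp: m_assoc inv_mult_group)
  qed
  also have "{W \<in> ?E. \<forall>y\<in>Q. ?conj y W = W} = {Z #> h | h. h \<in> H}"
  proof (intro equalityI subsetI)
    fix W assume "W \<in> {W \<in> ?E. \<forall>y\<in>Q. ?conj y W = W}"
    then obtain g where "g \<in> S" "W = Z #> g" "\<forall>y\<in>Q. ?conj y W = W" by blast
    then have "g \<in> H" using fixed_rcoset_iff_mem_H conj_E by simp
    then show "W \<in> {Z #> h | h. h \<in> H}" using \<open>W = Z #> g\<close> by blast
  next
    fix W assume "W \<in> {Z #> h | h. h \<in> H}"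
    then obtain h where "h \<in> H" "W = Z #> h" by blast
    moreover have "h \<in> S" using H_subset_S \<open>h \<in> H\<close> by blast
    ultimately show "W \<in> {W \<in> ?E. \<forall>y\<in>Q. ?conj y W = W}"
      using fixed_rcoset_iff_mem_H conj_E by auto
  qed
  finally show ?thesis .
qed

lemma q_part_card_S: "q_part q (card S) = card Z"
proof -
  let ?E = "{Z #> g | g. g \<in> S}" and ?F = "{Z #> h | h. h \<in> H}"
  have SG: "S \<subseteq> carrier G" using mem_S_iff by auto
  have HG: "H \<subseteq> carrier G" using subgroup.subset[OF H_subgroup] .
  have "Z #> g \<subseteq> S" if "g \<in> S" for g
    using mult_mem_S that by (auto simp: r_coset_def)
  then have card_S: "card S = card ?E * card Z"
    using card_union_of_rcosets[OF Z_subgroup finite_subset[OF SG finite_carrier] SG] by blast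
  have "Z #> h \<subseteq> H" if "h \<in> H" for h
    using Z_subset_H subgroup.m_closed[OF H_subgroup] that by (auto simp: r_coset_def)
  then have card_H: "card H = card ?F * card Z"
    using card_union_of_rcosets[OF Z_subgroup finite_subset[OF HG finite_carrier] HG] by blast
  have "card Z \<noteq> 0" "card ?F \<noteq> 0"
    using card_H card_subgroup_ne_0[OF finite_carrier Z_subgroup]
      card_subgroup_ne_0[OF finite_carrier H_subgroup] by auto
  moreover have "q_part q (card ?F * card Z) = q_part q (card Z)"
    using card_H q_part_card_subgroup_between[OF H_subgroup Z_subset_H H_subset_C] q_part_card_Z
    by simp
  ultimately have "\<not> q dvd card ?E"
    using q_part_mult_eq_iff[OF prime_q] card_rcosets_S_cong by (simp add: dvd_eq_mod_eq_0)
  moreover have "card ?E \<noteq> 0" using card_S \<open>\<not> q dvd card ?E\<close> by (intro notI) simp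
  ultimately have "q_part q (card ?E * card Z) = q_part q (card Z)"
    using q_part_mult_eq_iff[OF prime_q] \<open>card Z \<noteq> 0\<close> by blast
  then show ?thesis using card_S q_part_card_Z by simp
qed

end

theorem proposition3p7:
  fixes G (structure) and \<pi> :: "nat set" and q :: nat and Q :: "'a set"
  assumes "group G" and "finite (carrier G)"
    and "\<forall>p\<in>\<pi>. Factorial_Ring.prime p" and "q \<in> \<pi>"
    and "sylow_subgroup G q Q"
    and "center (G\<lparr>carrier := Q\<rparr>) \<subseteq> center G"
    and "\<exists>H. hall_subgroup G \<pi> (centralizer G Q) H \<and> normal_in G H (centralizer G Q)"
  shows "q_part q (card (center G)) = q_part q (card (S_qprime_pi G \<pi> q))"
proof -
  obtain H where "hall_subgroup G \<pi> (centralizer G Q) H" "normal_in G H (centralizer G Q)"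
    using assms(7) by blast
  with assms interpret central_sylow_hall G \<pi> q Q H
    by (intro central_sylow_hall.intro central_sylow_hall_axioms.intro) auto
  show ?thesis using q_part_card_center q_part_card_S by simp
qed

end
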